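(* Let $x_0\in(0,1)$ and let $a,b:[0,1]\to\mathbb R$ with $a(x_0)=b(x_0)=0$, $a,b>0$ on $[0,1]\setminus\{x_0\}$, $a,b\in W^{1,1}(0,1)$, and suppose there exist $K_1,K_2\in(0,1)$ with $K_1+K_2<1$ such that $(x-x_0)a'\le K_1a$ and $(x-x_0)b'\le K_2b$ a.e. in $[0,1]$. Then there exists a constant $\overline C_{HP}>0$ such that \[\int_0^1\frac{u^2}{ab}\,dx\le\overline C_{HP}\int_0^1(u')^2dx\] for every $u\in H^1_{\frac1a}(0,1):=L^2_{\frac1a}(0,1)\cap H^1_0(0,1)$.
   Context: $L^2_{\frac1a}(0,1)=\{u\in L^2(0,1):\int_0^1u^2/a\,dx<\infty\}$. *)

theory Defs
  imports "HOL-Analysis.Analysis"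
begin

text \<open>g is (a representative of) the weak derivative of f in W^{1,1}(0,1):
  g is Lebesgue integrable on [0,1] and f is its indefinite integral
  (f is identified with its absolutely continuous representative).\<close>
definition W11_deriv :: "(real \<Rightarrow> real) \<Rightarrow> (real \<Rightarrow> real) \<Rightarrow> bool" where
  "W11_deriv f g \<longleftrightarrow>
     integrable (lebesgue_on {0..1}) g \<and>
     (\<forall>x\<in>{0..1}. f x = f 0 + integral\<^sup>L (lebesgue_on {0..x}) g)"

definition W11 :: "(real \<Rightarrow> real) \<Rightarrow> bool" where
  "W11 f \<longleftrightarrow> (\<exists>g. W11_deriv f g)"

definition H10_deriv :: "(real \<Rightarrow> real) \<Rightarrow> (real \<Rightarrow> real) \<Rightarrow> bool" where
  "H10_deriv u v \<longleftrightarrow>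
     v \<in> borel_measurable (lebesgue_on {0..1}) \<and>
     integrable (lebesgue_on {0..1}) v \<and>
     integrable (lebesgue_on {0..1}) (\<lambda>x. (v x)\<^sup>2) \<and>
     (\<forall>x\<in>{0..1}. u x = integral\<^sup>L (lebesgue_on {0..x}) v) \<and>
     u 1 = 0"

definition L2_weighted :: "(real \<Rightarrow> real) \<Rightarrow> (real \<Rightarrow> real) \<Rightarrow> bool" where
  "L2_weighted a u \<longleftrightarrow>
     integrable (lebesgue_on {0..1}) (\<lambda>x. (u x)\<^sup>2) \<and>
     integrable (lebesgue_on {0..1}) (\<lambda>x. (u x)\<^sup>2 / a x)"

end

theory Submission
  imports Defs
begin

text \<open>On each side of \<open>x0\<close> the condition \<open>(x - x0) a' \<le> K1 a\<close> is a Gronwall inequality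
  with kernel \<open>K1 / |r - x0|\<close>, whose exponentiated integral is a power of the distance to \<open>x0\<close>;
  hence \<open>a x \<ge> c1 |x - x0| powr K1\<close>, and likewise \<open>b x \<ge> c2 |x - x0| powr K2\<close>.
  Since \<open>u 0 = 0\<close>, \<open>(u x)\<^sup>2\<close> is bounded by the energy \<open>\<integral>(u')\<^sup>2\<close> for every \<open>x\<close>, so \<open>u\<^sup>2/(a b)\<close> is
  at most the energy times \<open>|x - x0| powr -(K1 + K2) / (c1 c2)\<close>, which is integrable because
  \<open>K1 + K2 < 1\<close>.\<close>

lemma gronwall_inequality:
  fixes \<phi> \<beta> :: "real \<Rightarrow> real"
  assumes "s \<le> T" "continuous_on {s..T} \<phi>" "continuous_on {s..T} \<beta>"
    and \<beta>_nonneg: "\<And>t. t \<in> {s..T} \<Longrightarrow> 0 \<le> \<beta> t"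
    and le: "\<And>t. t \<in> {s..T} \<Longrightarrow> \<phi> t \<le> C + integral {s..t} (\<lambda>r. \<beta> r * \<phi> r)"
  shows "\<phi> T \<le> C * exp (integral {s..T} \<beta>)"
proof -
  define G where "G t = C + integral {s..t} (\<lambda>r. \<beta> r * \<phi> r)" for t
  define B where "B t = integral {s..t} \<beta>" for t
  define H where "H t = G t * exp (- B t)" for t
  have "continuous_on {s..T} (\<lambda>r. \<beta> r * \<phi> r)"
    using assms by (intro continuous_intros)
  then have G': "(G has_real_derivative \<beta> t * \<phi> t) (at t within {s..T})" if "t \<in> {s..T}" for t
    unfolding G_def using integral_has_vector_derivative[OF _ that]
    by (auto intro!: derivative_eq_intros simp: has_real_derivative_iff_has_vector_derivative)
  have B': "(B has_real_derivative \<beta> t) (at t within {s..T})" if "t \<in> {s..T}" for t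
    unfolding B_def using integral_has_vector_derivative[OF assms(3) that]
    by (simp add: has_real_derivative_iff_has_vector_derivative)
  have H': "(H has_real_derivative \<beta> t * exp (- B t) * (\<phi> t - G t)) (at t within {s..T})"
    if "t \<in> {s..T}" for t
    unfolding H_def using that
    by (auto intro!: derivative_eq_intros G' B' simp: algebra_simps)
  have "H T \<le> H s"
  proof (rule DERIV_nonpos_imp_decreasing_open[OF assms(1)])
    fix t assume t: "s < t" "t < T"
    then have "t \<in> {s..T}" by auto
    then have "\<beta> t * exp (- B t) * (\<phi> t - G t) \<le> 0"
      using \<beta>_nonneg le[of t] unfolding G_def by (intro mult_nonneg_nonpos) auto
    then show "\<exists>y. (H has_real_derivative y) (at t) \<and> y \<le> 0"
      using H'[OF \<open>t \<in> {s..T}\<close>] at_within_Icc_at[OF t] by auto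
  next
    show "continuous_on {s..T} H"
      using H' by (meson DERIV_continuous continuous_on_eq_continuous_within)
  qed
  then have "G T \<le> C * exp (B T)"
    by (simp add: H_def G_def B_def exp_minus field_simps)
  then show ?thesis
    using le[of T] assms(1) by (simp add: G_def B_def)
qed

lemma gronwall_inequality_backward:
  fixes \<phi> \<beta> :: "real \<Rightarrow> real"
  assumes "S \<le> t" "continuous_on {S..t} \<phi>" "continuous_on {S..t} \<beta>"
    and \<beta>_nonneg: "\<And>s. s \<in> {S..t} \<Longrightarrow> 0 \<le> \<beta> s"
    and le: "\<And>s. s \<in> {S..t} \<Longrightarrow> \<phi> s \<le> C + integral {s..t} (\<lambda>r. \<beta> r * \<phi> r)"
  shows "\<phi> S \<le> C * exp (integral {S..t} \<beta>)"
proof -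
  have "\<phi> (- (- S)) \<le> C * exp (integral {- t..- S} (\<lambda>r. \<beta> (- r)))"
  proof (rule gronwall_inequality)
    show "continuous_on {- t..- S} (\<lambda>r. \<phi> (- r))" "continuous_on {- t..- S} (\<lambda>r. \<beta> (- r))"
      using assms(2,3) by (auto intro!: continuous_on_compose2[where f=uminus] continuous_on_minus)
    fix r assume "r \<in> {- t..- S}"
    then show "0 \<le> \<beta> (- r)" using \<beta>_nonneg by auto
    have "integral {- t..r} (\<lambda>r. \<beta> (- r) * \<phi> (- r)) = integral {- r..t} (\<lambda>r. \<beta> r * \<phi> r)"
      using Henstock_Kurzweil_Integration.integral_reflect_real[of t "- r" "\<lambda>r. \<beta> r * \<phi> r"] by simp
    then show "\<phi> (- r) \<le> C + integral {- t..r} (\<lambda>r. \<beta> (- r) * \<phi> (- r))"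
      using le[of "- r"] \<open>r \<in> {- t..- S}\<close> by auto
  qed (use assms(1) in auto)
  then show ?thesis by simp
qed

lemma integral_inverse_distance_right:
  fixes x0 s t K :: real
  assumes "x0 < s" "s \<le> t"
  shows "integral {s..t} (\<lambda>r. K / (r - x0)) = K * ln ((t - x0) / (s - x0))"
proof -
  have "((\<lambda>r. K / (r - x0)) has_integral K * ln (t - x0) - K * ln (s - x0)) {s..t}"
    using assms by (intro fundamental_theorem_of_calculus)
      (auto intro!: derivative_eq_intros simp: has_real_derivative_iff_has_vector_derivative[symmetric])
  then show ?thesis using assms by (simp add: integral_unique ln_div right_diff_distrib)
qed

lemma integral_inverse_distance_left:
  fixes x0 s t K :: real
  assumes "s \<le> t" "t < x0"
  shows "integral {s..t} (\<lambda>r. K / (x0 - r)) = K * ln ((x0 - s) / (x0 - t))"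
proof -
  have "((\<lambda>r. K / (x0 - r)) has_integral - K * ln (x0 - t) - - K * ln (x0 - s)) {s..t}"
    using assms by (intro fundamental_theorem_of_calculus)
      (auto intro!: derivative_eq_intros simp: has_real_derivative_iff_has_vector_derivative[symmetric])
  then show ?thesis using assms by (simp add: integral_unique ln_div right_diff_distrib)
qed

lemma W11_deriv_continuous_on:
  assumes "W11_deriv f f'"
  shows "continuous_on {0..1} f"
proof -
  have "continuous_on {0..1} (\<lambda>x. f 0 + integral\<^sup>L (lebesgue_on {0..x}) f')"
    using assms indefinite_integral_continuous_real unfolding W11_deriv_def
    by (intro continuous_intros) blast
  moreover have "\<And>x. x \<in> {0..1} \<Longrightarrow> f 0 + integral\<^sup>L (lebesgue_on {0..x}) f' = f x"
    using assms unfolding W11_deriv_def by metis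
  ultimately show ?thesis
    by (rule continuous_on_eq)
qed

lemma W11_deriv_uminus:
  assumes "W11_deriv f f'"
  shows "W11_deriv (\<lambda>x. - f x) (\<lambda>x. - f' x)"
  unfolding W11_deriv_def
proof (intro conjI ballI)
  show "integrable (lebesgue_on {0..1}) (\<lambda>x. - f' x)"
    using assms by (simp add: W11_deriv_def)
  fix x :: real assume "x \<in> {0..1}"
  then have "f x = f 0 + integral\<^sup>L (lebesgue_on {0..x}) f'"
    using assms unfolding W11_deriv_def by blast
  then show "- f x = - f 0 + integral\<^sup>L (lebesgue_on {0..x}) (\<lambda>x. - f' x)"
    by simp
qed

lemma W11_deriv_increment_le:
  assumes f: "W11_deriv f f'" and st: "0 \<le> s" "s \<le> t" "t \<le> 1"
    and g: "continuous_on {s..t} g"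
    and le: "AE x in lebesgue_on {0..1}. x \<in> {s..t} \<longrightarrow> f' x \<le> g x"
  shows "f t - f s \<le> integral {s..t} g"
proof -
  have f'_int: "integrable (lebesgue_on {0..1}) f'"
    and f_eq: "\<And>x. x \<in> {0..1} \<Longrightarrow> f x = f 0 + integral\<^sup>L (lebesgue_on {0..x}) f'"
    using f unfolding W11_deriv_def by blast+
  have "integrable (lebesgue_on {0..t}) f'"
    using integrable_subinterval[OF f'_int, of 0 t] st by auto
  then have "integral\<^sup>L (lebesgue_on {0..t}) f' =
      integral\<^sup>L (lebesgue_on {0..s}) f' + integral\<^sup>L (lebesgue_on {s..t}) f'"
    using st by (intro Equivalence_Measurable_On_Borel.integral_combine) auto
  then have "f t - f s = integral\<^sup>L (lebesgue_on {s..t}) f'"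
    using f_eq[of s] f_eq[of t] st by simp
  also have "\<dots> \<le> integral\<^sup>L (lebesgue_on {s..t}) g"
  proof (rule integral_mono_AE)
    show "integrable (lebesgue_on {s..t}) f'"
      using integrable_subinterval[OF f'_int, of s t] st by auto
    show "integrable (lebesgue_on {s..t}) g"
      using g by (rule continuous_imp_integrable_real)
    have "AE x in lebesgue. x \<in> {0..1} \<longrightarrow> x \<in> {s..t} \<longrightarrow> f' x \<le> g x"
      using le by (subst (asm) AE_restrict_space_iff) auto
    then show "AE x in lebesgue_on {s..t}. f' x \<le> g x"
      using st by (subst AE_restrict_space_iff) (auto elim!: eventually_mono)
  qed
  also have "\<dots> = integral {s..t} g"
    using has_integral_integral_lebesgue_on[OF continuous_imp_integrable_real[OF g]]
    by (simp add: integral_unique)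
  finally show ?thesis .
qed

lemma W11_deriv_power_lower_bound_right:
  fixes f f' :: "real \<Rightarrow> real"
  assumes f: "W11_deriv f f'" and x0: "0 \<le> x0" "x0 < s" "s \<le> 1" and "0 \<le> K"
    and le: "AE x in lebesgue_on {0..1}. (x - x0) * f' x \<le> K * f x"
  shows "f 1 \<le> f s * ((1 - x0) / (s - x0)) powr K"
proof -
  have f_cont: "continuous_on {s..t} f" if "x0 < s" "t \<le> 1" for s t
    using W11_deriv_continuous_on[OF f] by (rule continuous_on_subset) (use that x0 in auto)
  have "f 1 \<le> f s * exp (integral {s..1} (\<lambda>r. K / (r - x0)))"
  proof (rule gronwall_inequality)
    show "continuous_on {s..1} f"
      using f_cont x0 by simp
    show "continuous_on {s..1} (\<lambda>r. K / (r - x0))"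
      using x0 by (intro continuous_intros) auto
    fix t assume t: "t \<in> {s..1}"
    then show "0 \<le> K / (t - x0)" using x0 \<open>0 \<le> K\<close> by auto
    have "f t - f s \<le> integral {s..t} (\<lambda>r. K / (r - x0) * f r)"
    proof (rule W11_deriv_increment_le[OF f])
      show "AE x in lebesgue_on {0..1}. x \<in> {s..t} \<longrightarrow> f' x \<le> K / (x - x0) * f x"
        using le by eventually_elim (use x0 in \<open>auto simp: field_simps\<close>)
      show "continuous_on {s..t} (\<lambda>r. K / (r - x0) * f r)"
        using f_cont[of s t] t x0 by (intro continuous_intros) auto
    qed (use t x0 in auto)
    then show "f t \<le> f s + integral {s..t} (\<lambda>r. K / (r - x0) * f r)" by simp
  qed (use x0 in auto)
  also have "exp (integral {s..1} (\<lambda>r. K / (r - x0))) = ((1 - x0) / (s - x0)) powr K"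
    using x0 by (simp add: integral_inverse_distance_right powr_def mult.commute)
  finally show ?thesis .
qed

lemma W11_deriv_power_lower_bound_left:
  fixes f f' :: "real \<Rightarrow> real"
  assumes f: "W11_deriv f f'" and x0: "0 \<le> t" "t < x0" "x0 \<le> 1" and "0 \<le> K"
    and le: "AE x in lebesgue_on {0..1}. (x - x0) * f' x \<le> K * f x"
  shows "f 0 \<le> f t * (x0 / (x0 - t)) powr K"
proof -
  have f_cont: "continuous_on {s..t} f" if "0 \<le> s" "t < x0" for s t
    using W11_deriv_continuous_on[OF f] by (rule continuous_on_subset) (use that x0 in auto)
  have "f 0 \<le> f t * exp (integral {0..t} (\<lambda>r. K / (x0 - r)))"
  proof (rule gronwall_inequality_backward)
    show "continuous_on {0..t} f"
      using f_cont x0 by simp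
    show "continuous_on {0..t} (\<lambda>r. K / (x0 - r))"
      using x0 by (intro continuous_intros) auto
    fix s assume s: "s \<in> {0..t}"
    then show "0 \<le> K / (x0 - s)" using x0 \<open>0 \<le> K\<close> by auto
    have "- f t - - f s \<le> integral {s..t} (\<lambda>r. K / (x0 - r) * f r)"
    proof (rule W11_deriv_increment_le[OF W11_deriv_uminus[OF f]])
      show "AE x in lebesgue_on {0..1}. x \<in> {s..t} \<longrightarrow> - f' x \<le> K / (x0 - x) * f x"
        using le by eventually_elim (use x0 in \<open>auto simp: field_simps\<close>)
      show "continuous_on {s..t} (\<lambda>r. K / (x0 - r) * f r)"
        using f_cont[of s t] s x0 by (intro continuous_intros) auto
    qed (use s x0 in auto)
    then show "f s \<le> f t + integral {s..t} (\<lambda>r. K / (x0 - r) * f r)" by simp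
  qed (use x0 in auto)
  also have "exp (integral {0..t} (\<lambda>r. K / (x0 - r))) = (x0 / (x0 - t)) powr K"
    using x0 by (simp add: integral_inverse_distance_left powr_def mult.commute)
  finally show ?thesis .
qed

lemma W11_deriv_power_lower_bound:
  fixes f f' :: "real \<Rightarrow> real"
  assumes f: "W11_deriv f f'" and x0: "x0 \<in> {0<..<1}" and "0 \<le> K"
    and pos: "0 < f 0" "0 < f 1" "0 \<le> f x0"
    and le: "AE x in lebesgue_on {0..1}. (x - x0) * f' x \<le> K * f x"
  shows "\<exists>c>0. \<forall>x\<in>{0..1}. c * \<bar>x - x0\<bar> powr K \<le> f x"
proof (intro exI conjI ballI)
  define c where "c = min (f 1 / (1 - x0) powr K) (f 0 / x0 powr K)"
  show "0 < c" using pos x0 by (simp add: c_def)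
  fix x :: real assume x: "x \<in> {0..1}"
  consider "x = x0" | "x0 < x" | "x < x0" by linarith
  then show "c * \<bar>x - x0\<bar> powr K \<le> f x"
  proof cases
    case 1
    then show ?thesis using pos by simp
  next
    case 2
    have "f 1 \<le> f x * ((1 - x0) / (x - x0)) powr K"
      using W11_deriv_power_lower_bound_right[OF f _ 2] x x0 \<open>0 \<le> K\<close> le by auto
    then have "f 1 / (1 - x0) powr K * \<bar>x - x0\<bar> powr K \<le> f x"
      using 2 x0 by (simp add: powr_divide divide_simps mult.commute)
    moreover have "c \<le> f 1 / (1 - x0) powr K" by (simp add: c_def)
    ultimately show ?thesis by (meson mult_right_mono order_trans powr_ge_zero)
  next
    case 3
    have "f 0 \<le> f x * (x0 / (x0 - x)) powr K"
      using W11_deriv_power_lower_bound_left[OF f _ 3] x x0 \<open>0 \<le> K\<close> le by auto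
    then have "f 0 / x0 powr K * \<bar>x - x0\<bar> powr K \<le> f x"
      using 3 x0 by (simp add: powr_divide divide_simps mult.commute)
    moreover have "c \<le> f 0 / x0 powr K" by (simp add: c_def)
    ultimately show ?thesis by (meson mult_right_mono order_trans powr_ge_zero)
  qed
qed

lemma H10_deriv_square_le:
  fixes u u' :: "real \<Rightarrow> real"
  assumes u: "H10_deriv u u'" and x: "x \<in> {0..1}"
  shows "(u x)\<^sup>2 \<le> integral\<^sup>L (lebesgue_on {0..1}) (\<lambda>r. (u' r)\<^sup>2)"
proof -
  define I where "I = integral\<^sup>L (lebesgue_on {0..1}) (\<lambda>r. (u' r)\<^sup>2)"
  have u'_sq_int: "integrable (lebesgue_on {0..1}) (\<lambda>r. (u' r)\<^sup>2)"
    and u_eq: "u x = integral\<^sup>L (lebesgue_on {0..x}) u'"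
    using u x unfolding H10_deriv_def by blast+
  have bound_int: "integrable (lebesgue_on {0..1}) (\<lambda>r. (u x)\<^sup>2 / 2 + (u' r)\<^sup>2 / 2)"
    using u'_sq_int by (simp add: finite_measure_lebesgue_on finite_measure.integrable_const)
  \<comment> \<open>Multiplying by \<open>|u x|\<close> turns Cauchy-Schwarz into \<open>2 |u x| |u' r| \<le> (u x)\<^sup>2 + (u' r)\<^sup>2\<close>.\<close>
  have "(u x)\<^sup>2 = \<bar>u x\<bar> * \<bar>integral\<^sup>L (lebesgue_on {0..x}) u'\<bar>"
    by (simp add: u_eq power2_eq_square)
  also have "\<dots> \<le> \<bar>u x\<bar> * integral\<^sup>L (lebesgue_on {0..x}) (\<lambda>r. \<bar>u' r\<bar>)"
    by (intro mult_left_mono integral_abs_bound) auto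
  also have "\<dots> = integral\<^sup>L (lebesgue_on {0..x}) (\<lambda>r. \<bar>u x\<bar> * \<bar>u' r\<bar>)"
    by simp
  also have "\<dots> \<le> integral\<^sup>L (lebesgue_on {0..1}) (\<lambda>r. (u x)\<^sup>2 / 2 + (u' r)\<^sup>2 / 2)"
  proof (rule integral_mono_lebesgue_on_AE[OF bound_int])
    have "\<bar>u x\<bar> * \<bar>u' r\<bar> \<le> (u x)\<^sup>2 / 2 + (u' r)\<^sup>2 / 2" for r
      using sum_squares_bound[of "\<bar>u x\<bar>" "\<bar>u' r\<bar>"] by simp
    then show "AE r in lebesgue_on {0..x}. \<bar>u x\<bar> * \<bar>u' r\<bar> \<le> (u x)\<^sup>2 / 2 + (u' r)\<^sup>2 / 2"
      by simp
  qed (use x in auto)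
  also have "\<dots> = (u x)\<^sup>2 / 2 + I / 2"
    using u'_sq_int by (simp add: I_def measure_restrict_space finite_measure_lebesgue_on finite_measure.integrable_const)
  finally show ?thesis by (simp add: I_def)
qed

lemma integrable_on_abs_powr:
  fixes a b K :: real
  assumes "K < 1" "a \<le> 0" "0 \<le> b"
  shows "(\<lambda>y. \<bar>y\<bar> powr - K) integrable_on {a..b}"
proof -
  have right: "(\<lambda>y. \<bar>y\<bar> powr - K) integrable_on {0..c}" if "0 \<le> c" for c
  proof (rule integrable_eq)
    show "(\<lambda>y. y powr - K) integrable_on {0..c}"
      using that assms(1) by (intro integrable_on_powr_from_0) auto
  qed simp
  have left: "(\<lambda>y. \<bar>y\<bar> powr - K) integrable_on {a..0}"
    using Henstock_Kurzweil_Integration.integrable_reflect_real[where f="\<lambda>y. \<bar>y\<bar> powr - K" and a=0 and b="- a"]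
      right[of "- a"] assms(2) by simp
  show ?thesis
    using assms(2,3) left right[OF assms(3)] by (rule Henstock_Kurzweil_Integration.integrable_combine)
qed

lemma integrable_abs_diff_powr:
  fixes a b x0 K :: real
  assumes "x0 \<in> {a..b}" "K < 1"
  shows "integrable (lebesgue_on {a..b}) (\<lambda>x. \<bar>x - x0\<bar> powr - K)"
proof -
  have "(\<lambda>y. \<bar>y\<bar> powr - K) integrable_on {a + - x0..b + - x0}"
    using assms by (intro integrable_on_abs_powr) auto
  then have "((\<lambda>y. \<bar>y\<bar> powr - K) \<circ> (+) (- x0)) integrable_on {a..b}"
    by (simp only: integrable_on_shift_Icc_real)
  then have "(\<lambda>x. \<bar>x - x0\<bar> powr - K) integrable_on {a..b}"
    by (simp add: o_def)
  then have "(\<lambda>x. \<bar>x - x0\<bar> powr - K) absolutely_integrable_on {a..b}"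
    by (rule nonnegative_absolutely_integrable_1) simp
  then show ?thesis
    by (simp add: integrable_restrict_space set_integrable_def)
qed

lemma inverse_mult_le_powr:
  fixes c1 c2 d K1 K2 p q :: real
  assumes "0 < c1" "0 < c2" "0 < d" "c1 * d powr K1 \<le> p" "c2 * d powr K2 \<le> q"
  shows "1 / (p * q) \<le> d powr - (K1 + K2) / (c1 * c2)"
proof -
  have "0 < c1 * d powr K1" "0 < c2 * d powr K2"
    using assms by simp_all
  then have "0 \<le> p"
    using assms by linarith
  have "c1 * c2 * d powr (K1 + K2) = (c1 * d powr K1) * (c2 * d powr K2)"
    by (simp add: powr_add)
  also have "\<dots> \<le> p * q"
    using assms \<open>0 \<le> p\<close> by (intro mult_mono) auto
  finally have "1 / (p * q) \<le> 1 / (c1 * c2 * d powr (K1 + K2))"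
    using assms by (intro frac_le) auto
  also have "\<dots> = d powr - (K1 + K2) / (c1 * c2)"
    unfolding powr_minus_divide by simp
  finally show ?thesis .
qed

lemma nn_integral_le_times_integral:
  fixes f w :: "'a \<Rightarrow> real"
  assumes "integrable M w" "AE x in M. 0 \<le> w x" "0 \<le> I" "AE x in M. f x \<le> I * w x"
  shows "(\<integral>\<^sup>+x. ennreal (f x) \<partial>M) \<le> ennreal (I * integral\<^sup>L M w)"
proof -
  have "(\<integral>\<^sup>+x. ennreal (f x) \<partial>M) \<le> (\<integral>\<^sup>+x. ennreal (I * w x) \<partial>M)"
    using assms(4) by (intro nn_integral_mono_AE) (auto elim!: eventually_mono intro: ennreal_leI)
  also have "\<dots> = ennreal (integral\<^sup>L M (\<lambda>x. I * w x))"
    using assms(1-3) by (intro nn_integral_eq_integral) (auto elim!: eventually_mono)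
  finally show ?thesis by simp
qed
lemma H10_deriv_weighted_nn_integral_le:
  fixes u u' \<rho> w :: "real \<Rightarrow> real"
  assumes u: "H10_deriv u u'" and w_int: "integrable (lebesgue_on {0..1}) w"
    and w_nonneg: "\<And>x. x \<in> {0..1} \<Longrightarrow> 0 \<le> w x"
    and w_bound: "\<And>x. x \<in> {0..1} \<Longrightarrow> 1 / \<rho> x \<le> w x"
  shows "(\<integral>\<^sup>+ x. ennreal ((u x)\<^sup>2 / \<rho> x) \<partial>lebesgue_on {0..1})
           \<le> ennreal (integral\<^sup>L (lebesgue_on {0..1}) w) * (\<integral>\<^sup>+ x. ennreal ((u' x)\<^sup>2) \<partial>lebesgue_on {0..1})"
proof -
  define I where "I = integral\<^sup>L (lebesgue_on {0..1}) (\<lambda>x. (u' x)\<^sup>2)"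
  have "0 \<le> I"
    unfolding I_def by (intro integral_nonneg_AE) auto
  have "0 \<le> integral\<^sup>L (lebesgue_on {0..1}) w"
    using w_nonneg by (intro integral_nonneg_AE) (simp add: AE_restrict_space_iff)
  have "(\<integral>\<^sup>+ x. ennreal ((u x)\<^sup>2 / \<rho> x) \<partial>lebesgue_on {0..1})
      \<le> ennreal (I * integral\<^sup>L (lebesgue_on {0..1}) w)"
  proof (rule nn_integral_le_times_integral[OF w_int _ \<open>0 \<le> I\<close>])
    have "(u x)\<^sup>2 / \<rho> x \<le> I * w x" if "x \<in> {0..1}" for x
      using mult_mono[OF w_bound[OF that] H10_deriv_square_le[OF u that] w_nonneg[OF that] zero_le_power2]
      unfolding I_def by (simp add: mult.commute)
    then show "AE x in lebesgue_on {0..1}. (u x)\<^sup>2 / \<rho> x \<le> I * w x"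
      by (simp add: AE_restrict_space_iff)
    show "AE x in lebesgue_on {0..1}. 0 \<le> w x"
      using w_nonneg by (simp add: AE_restrict_space_iff)
  qed
  also have "\<dots> = ennreal (integral\<^sup>L (lebesgue_on {0..1}) w) * ennreal I"
    using \<open>0 \<le> I\<close> \<open>0 \<le> integral\<^sup>L (lebesgue_on {0..1}) w\<close> by (simp add: ennreal_mult mult.commute)
  also have "ennreal I = (\<integral>\<^sup>+ x. ennreal ((u' x)\<^sup>2) \<partial>lebesgue_on {0..1})"
    using u unfolding I_def H10_deriv_def by (intro nn_integral_eq_integral[symmetric]) auto
  finally show ?thesis .
qed

lemma weighted_poincare_inequality:
  fixes \<rho> w :: "real \<Rightarrow> real"
  assumes w_int: "integrable (lebesgue_on {0..1}) w"
    and w_nonneg: "\<And>x. x \<in> {0..1} \<Longrightarrow> 0 \<le> w x"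
    and w_bound: "\<And>x. x \<in> {0..1} \<Longrightarrow> 1 / \<rho> x \<le> w x"
  shows "\<exists>C>0. \<forall>u u'. H10_deriv u u' \<longrightarrow>
           (\<integral>\<^sup>+ x. ennreal ((u x)\<^sup>2 / \<rho> x) \<partial>lebesgue_on {0..1})
             \<le> ennreal C * (\<integral>\<^sup>+ x. ennreal ((u' x)\<^sup>2) \<partial>lebesgue_on {0..1})"
proof (intro exI conjI allI impI)
  define W where "W = integral\<^sup>L (lebesgue_on {0..1}) w"
  have "0 \<le> W"
    unfolding W_def using w_nonneg by (intro integral_nonneg_AE) (simp add: AE_restrict_space_iff)
  then show "0 < W + 1" by simp
  fix u u' :: "real \<Rightarrow> real"
  assume "H10_deriv u u'"
  then have "(\<integral>\<^sup>+ x. ennreal ((u x)\<^sup>2 / \<rho> x) \<partial>lebesgue_on {0..1})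
      \<le> ennreal W * (\<integral>\<^sup>+ x. ennreal ((u' x)\<^sup>2) \<partial>lebesgue_on {0..1})"
    unfolding W_def using assms by (rule H10_deriv_weighted_nn_integral_le)
  also have "\<dots> \<le> ennreal (W + 1) * (\<integral>\<^sup>+ x. ennreal ((u' x)\<^sup>2) \<partial>lebesgue_on {0..1})"
    by (intro mult_right_mono ennreal_leI) auto
  finally show "(\<integral>\<^sup>+ x. ennreal ((u x)\<^sup>2 / \<rho> x) \<partial>lebesgue_on {0..1})
      \<le> ennreal (W + 1) * (\<integral>\<^sup>+ x. ennreal ((u' x)\<^sup>2) \<partial>lebesgue_on {0..1})" .
qed

theorem lemma2p7:
  fixes a b a' b' :: "real \<Rightarrow> real" and x0 K1 K2 :: real
  assumes "x0 \<in> {0<..<1}"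
    and "a x0 = 0" and "b x0 = 0"
    and "\<forall>x\<in>{0..1} - {x0}. a x > 0" and "\<forall>x\<in>{0..1} - {x0}. b x > 0"
    and "W11_deriv a a'" and "W11_deriv b b'"
    and "K1 \<in> {0<..<1}" and "K2 \<in> {0<..<1}" and "K1 + K2 < 1"
    and "AE x in lebesgue_on {0..1}. (x - x0) * a' x \<le> K1 * a x"
    and "AE x in lebesgue_on {0..1}. (x - x0) * b' x \<le> K2 * b x"
  shows "\<exists>C>0. \<forall>u u'. H10_deriv u u' \<and> L2_weighted a u \<longrightarrow>
           (\<integral>\<^sup>+ x. ennreal ((u x)\<^sup>2 / (a x * b x)) \<partial>lebesgue_on {0..1})
             \<le> ennreal C * (\<integral>\<^sup>+ x. ennreal ((u' x)\<^sup>2) \<partial>lebesgue_on {0..1})"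
proof -
  obtain c1 where c1: "0 < c1" "\<forall>x\<in>{0..1}. c1 * \<bar>x - x0\<bar> powr K1 \<le> a x"
    using W11_deriv_power_lower_bound[OF assms(6,1) _ _ _ _ assms(11)] assms(1,2,4,8) by force
  obtain c2 where c2: "0 < c2" "\<forall>x\<in>{0..1}. c2 * \<bar>x - x0\<bar> powr K2 \<le> b x"
    using W11_deriv_power_lower_bound[OF assms(7,1) _ _ _ _ assms(12)] assms(1,3,5,9) by force
  define w where "w x = \<bar>x - x0\<bar> powr - (K1 + K2) / (c1 * c2)" for x
  have w_int: "integrable (lebesgue_on {0..1}) w"
    unfolding w_def using integrable_abs_diff_powr[of x0 0 1 "K1 + K2"] assms(1,10) by simp
  have w_nonneg: "0 \<le> w x" for x
    using c1 c2 by (simp add: w_def)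
  have w_bound: "1 / (a x * b x) \<le> w x" if "x \<in> {0..1}" for x
  proof (cases "x = x0")
    case True
    then show ?thesis using assms(2) w_nonneg by simp
  next
    case False
    then show ?thesis
      unfolding w_def using c1 c2 that by (intro inverse_mult_le_powr) auto
  qed
  show ?thesis
    using weighted_poincare_inequality[OF w_int w_nonneg w_bound] by blast
qed

end
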